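(* The following two statements are equivalent: (1) For every prime $p>2$, the graph $\mathcal{G}_p^\times$ is connected and is equivalent to the graph $\mathcal{G}^\times$ with triples congruent modulo $p$ identified. (2) For every prime $p>2$, the canonical reduction map $\mathcal{M} \to \mathcal{M}_p$, $(a,b,c) \mapsto (a \bmod p, b \bmod p, c \bmod p)$, is onto.
   Context: $\mathcal{M}$ is the set of triples $(a,b,c)$ of nonnegative integers with $a^2+b^2+c^2 - abc = 0$, and $\mathcal{M}^\times = \mathcal{M}\setminus\{(0,0,0)\}$. For a prime $p > 2$, $\mathcal{M}_p$ is the set of $(x,y,z) \in (\mathbb{Z}/p\mathbb{Z})^3$ with $x^2+y^2+z^2-xyz \equiv 0 \pmod p$ and $\mathcal{M}_p^\times = \mathcal{M}_p \setminus\{(0,0,0)\}$. The Vieta involutions are $V_1(a,b,c) = (bc-a,b,c)$, $V_2(a,b,c) = (a,ac-b,c)$, $V_3(a,b,c) = (a,b,ab-c)$. The Markoff tree $\mathcal{G}^\times$ is the graph with vertex set $\mathcal{M}^\times$ (a connected tree rooted at $(3,3,3)$) with an edge labeled $V_i$ between $v_1,v_2$ whenever $V_i(v_1) = v_2$; the graph $\mathcal{G}_p^\times$ is defined in the same way with vertex set $\mathcal{M}_p^\times$ and the involutions taken modulo $p$. *)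

theory Defs
  imports "HOL-Computational_Algebra.Primes"
begin

type_synonym triple = "int \<times> int \<times> int"

definition markoff :: "triple set" where
  "markoff = {(a,b,c). a \<ge> 0 \<and> b \<ge> 0 \<and> c \<ge> 0 \<and> a^2 + b^2 + c^2 - a*b*c = 0}"

definition markoffX :: "triple set" where
  "markoffX = markoff - {(0,0,0)}"

text \<open>Elements of (Z/pZ)^3 are represented by integer triples with entries in {0..p-1}.\<close>
definition red :: "int \<Rightarrow> triple \<Rightarrow> triple" where
  "red p v = (case v of (a,b,c) \<Rightarrow> (a mod p, b mod p, c mod p))"

definition markoff_p :: "int \<Rightarrow> triple set" where
  "markoff_p p = {(x,y,z). x \<in> {0..<p} \<and> y \<in> {0..<p} \<and> z \<in> {0..<p} \<and>
                       (x^2 + y^2 + z^2 - x*y*z) mod p = 0}"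

definition markoff_pX :: "int \<Rightarrow> triple set" where
  "markoff_pX p = markoff_p p - {(0,0,0)}"

definition vieta :: "nat \<Rightarrow> triple \<Rightarrow> triple" where
  "vieta i v = (case v of (a,b,c) \<Rightarrow>
     if i = 1 then (b*c - a, b, c) else if i = 2 then (a, a*c - b, c) else (a, b, a*b - c))"

definition vieta_p :: "int \<Rightarrow> nat \<Rightarrow> triple \<Rightarrow> triple" where
  "vieta_p p i v = red p (vieta i v)"

definition edgesX :: "(triple \<times> nat \<times> triple) set" where
  "edgesX = {(v, i, vieta i v) | v i. v \<in> markoffX \<and> i \<in> {1,2,3}}"

definition edges_pX :: "int \<Rightarrow> (triple \<times> nat \<times> triple) set" where
  "edges_pX p = {(x, i, vieta_p p i x) | x i. x \<in> markoff_pX p \<and> i \<in> {1,2,3}}"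

definition connected_pX :: "int \<Rightarrow> bool" where
  "connected_pX p = (\<forall>x \<in> markoff_pX p. \<forall>y \<in> markoff_pX p.
      (x, y) \<in> {(u, w). \<exists>i. (u, i, w) \<in> edges_pX p}\<^sup>*)"

text \<open>G^x with triples congruent mod p identified: vertices are the residue classes
  (represented by the reductions) of the vertices, edges are the images of edges.
  Classes reducing to (0,0,0) are discarded (only relevant for p = 3).\<close>
definition quot_vertices :: "int \<Rightarrow> triple set" where
  "quot_vertices p = red p ` markoffX - {(0,0,0)}"

definition quot_edges :: "int \<Rightarrow> (triple \<times> nat \<times> triple) set" where
  "quot_edges p = {(red p v, i, red p w) | v i w. (v, i, w) \<in> edgesX \<and>
                    red p v \<noteq> (0,0,0) \<and> red p w \<noteq> (0,0,0)}"

end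

theory Submission
  imports Defs "HOL-Number_Theory.Cong"
begin

(* The Vieta involutions preserve the Markoff form and commute with reduction mod p, and
   V_i mod p is an involution of M_p fixing the origin. Hence reduction maps edges of G^x
   between vertices with nonzero reduction to edges of G_p^x, and G^x with triples identified
   mod p is always a subgraph of G_p^x; it is all of G_p^x exactly when every nonzero point
   of M_p lifts, i.e. when reduction is onto (the origin lifts to itself). Connectivity then
   comes for free: replacing the largest coordinate of a Markoff triple other than (3,3,3) by
   the other root of the quadratic it satisfies decreases the coordinate sum, so every vertex
   of G^x is joined to (3,3,3), and reducing these paths joins every point of M_p^x to the
   reduction of (3,3,3). *)

definition markoff_form :: "triple \<Rightarrow> int" where
  "markoff_form v = (case v of (a,b,c) \<Rightarrow> a^2 + b^2 + c^2 - a*b*c)"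

lemma markoff_form_vieta: "markoff_form (vieta i v) = markoff_form v"
  by (cases v) (auto simp: markoff_form_def vieta_def power2_eq_square algebra_simps)

lemma vieta_involutive: "vieta i (vieta i v) = v"
  by (cases v) (auto simp: vieta_def)

lemma markoffX_iff:
  "(a,b,c) \<in> markoffX \<longleftrightarrow>
     0 \<le> a \<and> 0 \<le> b \<and> 0 \<le> c \<and> markoff_form (a,b,c) = 0 \<and> (a,b,c) \<noteq> (0,0,0)"
  by (auto simp: markoffX_def markoff_def markoff_form_def)

lemma markoff_coord_ge3:
  fixes a b c :: int
  assumes "a \<ge> 0" "b \<ge> 0" "c \<ge> 0" "a^2 + b^2 + c^2 = a*b*c" "(a,b,c) \<noteq> (0,0,0)"
  shows "a \<ge> 3"
proof (rule ccontr)
  assume "\<not> a \<ge> 3"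
  with assms(1) consider "a = 0" | "a = 1" | "a = 2" by linarith
  then show False
  proof cases
    case 1 with assms show False by (simp add: sum_power2_eq_zero_iff)
  next
    case 2
    have "b^2 + c^2 - b*c = (b - c)^2 + b*c" by (simp add: power2_eq_square algebra_simps)
    moreover have "(b - c)^2 + b*c \<ge> 0" using assms(2,3) by simp
    ultimately show False using 2 assms(4) by simp
  next
    case 3
    have "b^2 + c^2 - 2*b*c = (b - c)^2" by (simp add: power2_eq_square algebra_simps)
    then show False using 3 assms(4) zero_le_power2[of "b - c"] by (simp add: algebra_simps)
  qed
qed

lemma markoff_other_root_smaller:
  fixes a b c :: int
  assumes "3 \<le> a" "a \<le> b" "b \<le> c" "a^2 + b^2 + c^2 = a*b*c" "(a,b,c) \<noteq> (3,3,3)"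
  shows "0 < a*b - c \<and> a*b - c < c"
proof -
  define d where "d = a*b - c"
  have cd: "c*d = a^2 + b^2" using assms(4) by (simp add: d_def power2_eq_square algebra_simps)
  have "0 < c*d" unfolding cd using assms(1,2) by (simp add: add_pos_nonneg)
  then have "0 < d" using assms(1-3) by (simp add: zero_less_mult_iff)
  \<comment> \<open>\<open>c\<close> and \<open>d\<close> are the roots of \<open>t\<^sup>2 - a b t + a\<^sup>2 + b\<^sup>2\<close>, which is \<open>\<le> 0\<close> at \<open>t = b\<close>\<close>
  have "(c - b)*(d - b) = 2*b^2 + a^2 - a*b^2"
    using cd by (simp add: d_def power2_eq_square algebra_simps)
  also have "\<dots> \<le> 0"
  proof -
    have "3*b^2 \<le> a*b^2" using assms(1) by (simp add: mult_right_mono)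
    moreover have "a^2 \<le> b^2" using assms(1,2) by (simp add: power_mono)
    ultimately show ?thesis by simp
  qed
  finally have prod: "(c - b)*(d - b) \<le> 0" .
  have "d < c"
  proof (cases "b < c")
    case True
    with prod have "d \<le> b" by (simp add: mult_le_0_iff)
    with True show ?thesis by simp
  next
    case False
    with assms(3) have "b = c" by simp
    with assms(4) have "a^2 = b^2*(a - 2)" by (simp add: power2_eq_square algebra_simps)
    moreover have "a^2 \<le> b^2" using assms(1,2) by (simp add: power_mono)
    ultimately have "a - 2 \<le> 1"
      using assms(1,2) by (simp add: mult_le_cancel_left1)
    with assms(1) have "a = 3" by simp
    with \<open>a^2 = b^2*(a - 2)\<close> have "b^2 = 3^2" by simp
    then have "b = 3" by (rule power2_eq_imp_eq) (use assms(1,2) in simp_all)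
    with \<open>a = 3\<close> \<open>b = c\<close> assms(5) show ?thesis by simp
  qed
  with \<open>0 < d\<close> show ?thesis by (simp add: d_def)
qed

lemma markoff_other_root_of_max:
  fixes a b c :: int
  assumes "3 \<le> a" "3 \<le> b" "a \<le> c" "b \<le> c" "a^2 + b^2 + c^2 = a*b*c" "(a,b,c) \<noteq> (3,3,3)"
  shows "0 < a*b - c \<and> a*b - c < c"
proof (cases "a \<le> b")
  case True
  with assms show ?thesis by (intro markoff_other_root_smaller) auto
next
  case False
  with assms have "0 < b*a - c \<and> b*a - c < c"
    by (intro markoff_other_root_smaller) (auto simp: algebra_simps)
  then show ?thesis by (simp add: mult.commute)
qed

lemma markoffX_coords_ge3:
  assumes "(a,b,c) \<in> markoffX"
  shows "3 \<le> a \<and> 3 \<le> b \<and> 3 \<le> c"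
proof -
  from assms have "0 \<le> a" "0 \<le> b" "0 \<le> c" "a^2 + b^2 + c^2 = a*b*c" "(a,b,c) \<noteq> (0,0,0)"
    by (auto simp: markoffX_def markoff_def)
  then show ?thesis
    using markoff_coord_ge3[of a b c] markoff_coord_ge3[of b a c] markoff_coord_ge3[of c a b]
    by (auto simp: algebra_simps)
qed

definition coord_sum :: "triple \<Rightarrow> int" where
  "coord_sum v = (case v of (a,b,c) \<Rightarrow> a + b + c)"

definition markoff_adj :: "(triple \<times> triple) set" where
  "markoff_adj = {(u, w). \<exists>i. (u, i, w) \<in> edgesX}"

lemma markoffX_descent_step:
  assumes "u \<in> markoffX" "u \<noteq> (3,3,3)"
  obtains i where "i \<in> {1,2,3}" "vieta i u \<in> markoffX" "coord_sum (vieta i u) < coord_sum u"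
proof -
  obtain a b c where u: "u = (a,b,c)" by (cases u)
  with assms have ge3: "3 \<le> a" "3 \<le> b" "3 \<le> c" using markoffX_coords_ge3 by auto
  from assms have eq: "a^2 + b^2 + c^2 = a*b*c" and ne: "(a,b,c) \<noteq> (3,3,3)"
    by (auto simp: u markoffX_def markoff_def)
  have "\<exists>i \<in> {1,2,3}. (\<exists>a' b' c'. vieta i u = (a',b',c') \<and> 0 < a' \<and> 0 < b' \<and> 0 < c')
          \<and> coord_sum (vieta i u) < coord_sum u"
  proof -
    consider "a \<le> c" "b \<le> c" | "b \<le> a" "c \<le> a" | "a \<le> b" "c \<le> b" by linarith
    then show ?thesis
    proof cases
      case 1
      with ge3 eq ne have "0 < a*b - c \<and> a*b - c < c" by (intro markoff_other_root_of_max) auto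
      with ge3 show ?thesis by (intro bexI[of _ 3]) (auto simp: u vieta_def coord_sum_def)
    next
      case 2
      with ge3 eq ne have "0 < b*c - a \<and> b*c - a < a"
        by (intro markoff_other_root_of_max) (auto simp: algebra_simps)
      with ge3 show ?thesis by (intro bexI[of _ 1]) (auto simp: u vieta_def coord_sum_def)
    next
      case 3
      with ge3 eq ne have "0 < a*c - b \<and> a*c - b < b"
        by (intro markoff_other_root_of_max) (auto simp: algebra_simps)
      with ge3 show ?thesis by (intro bexI[of _ 2]) (auto simp: u vieta_def coord_sum_def)
    qed
  qed
  then obtain i a' b' c' where i: "i \<in> {1,2,3}" "vieta i u = (a',b',c')" "0 < a'" "0 < b'" "0 < c'"
    and smaller: "coord_sum (vieta i u) < coord_sum u" by blast
  have "markoff_form (vieta i u) = 0"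
    using assms(1) by (simp add: markoff_form_vieta u markoffX_iff)
  with i have "vieta i u \<in> markoffX" by (simp add: markoffX_iff)
  with i(1) smaller that show thesis by blast
qed

lemma markoff_adj_vieta: "u \<in> markoffX \<Longrightarrow> i \<in> {1,2,3} \<Longrightarrow> (u, vieta i u) \<in> markoff_adj"
  unfolding markoff_adj_def edgesX_def by blast

lemma markoffX_reaches_root: "u \<in> markoffX \<Longrightarrow> (u, (3,3,3)) \<in> markoff_adj\<^sup>*"
proof (induction u rule: measure_induct_rule[of "\<lambda>v. nat (coord_sum v)"])
  case (less u)
  show ?case
  proof (cases "u = (3,3,3)")
    case False
    with less.prems obtain i where
      i: "i \<in> {1,2,3}" "vieta i u \<in> markoffX" "coord_sum (vieta i u) < coord_sum u"
      by (rule markoffX_descent_step)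
    have "0 \<le> coord_sum (vieta i u)"
      using i(2) by (cases "vieta i u") (simp add: markoffX_iff coord_sum_def)
    with i have "(vieta i u, (3,3,3)) \<in> markoff_adj\<^sup>*" by (intro less.IH) auto
    with markoff_adj_vieta[OF less.prems i(1)] show ?thesis
      by (rule converse_rtrancl_into_rtrancl)
  qed simp
qed

lemma markoff_form_red_mod: "markoff_form (red p v) mod p = markoff_form v mod p"
  unfolding cong_def[symmetric]
  by (cases v) (simp add: markoff_form_def red_def cong_diff cong_add cong_mult cong_pow)

lemma vieta_p_red: "vieta_p p i (red p v) = red p (vieta i v)"
  unfolding vieta_p_def
  by (cases v) (simp add: red_def vieta_def cong_def[symmetric] cong_diff cong_mult)

lemma red_idem: "red p (red p v) = red p v"
  by (cases v) (simp add: red_def)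

lemma red_zero: "red p (0,0,0) = (0,0,0)"
  by (simp add: red_def)

lemma vieta_p_zero: "vieta_p p i (0,0,0) = (0,0,0)"
  by (simp add: vieta_p_def vieta_def red_def)

lemma mem_residues_iff_mod_eq: "(a::int) \<in> {0..<p} \<longleftrightarrow> 0 < p \<and> a mod p = a"
proof
  assume "0 < p \<and> a mod p = a"
  then show "a \<in> {0..<p}" using pos_mod_sign[of p a] pos_mod_bound[of p a] by simp
qed (auto simp: mod_pos_pos_trivial)

lemma markoff_p_iff: "x \<in> markoff_p p \<longleftrightarrow> 0 < p \<and> red p x = x \<and> markoff_form x mod p = 0"
  by (cases x) (auto simp: markoff_p_def red_def markoff_form_def mem_residues_iff_mod_eq
      simp del: atLeastLessThan_iff)

lemma red_in_markoff_p: "0 < p \<Longrightarrow> v \<in> markoff \<Longrightarrow> red p v \<in> markoff_p p"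
  unfolding markoff_p_iff
  by (cases v) (simp add: red_idem markoff_form_red_mod, simp add: markoff_def markoff_form_def)

lemma vieta_p_involutive: "x \<in> markoff_p p \<Longrightarrow> vieta_p p i (vieta_p p i x) = x"
  unfolding markoff_p_iff by (metis vieta_p_def vieta_p_red vieta_involutive)

lemma vieta_p_in_markoff_pX: "x \<in> markoff_pX p \<Longrightarrow> vieta_p p i x \<in> markoff_pX p"
proof -
  assume x: "x \<in> markoff_pX p"
  then have "vieta_p p i x \<in> markoff_p p"
    by (simp add: markoff_pX_def markoff_p_iff vieta_p_def red_idem markoff_form_red_mod
        markoff_form_vieta)
  moreover have "vieta_p p i x \<noteq> (0,0,0)"
    using x vieta_p_involutive[of x p i] vieta_p_zero[of p i] by (auto simp: markoff_pX_def)
  ultimately show ?thesis by (simp add: markoff_pX_def)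
qed

definition markoff_p_adj :: "int \<Rightarrow> (triple \<times> triple) set" where
  "markoff_p_adj p = {(x, y). \<exists>i. (x, i, y) \<in> edges_pX p}"

lemma edges_pX_in_markoff_pX: "(x, i, y) \<in> edges_pX p \<Longrightarrow> x \<in> markoff_pX p \<and> y \<in> markoff_pX p"
  by (auto simp: edges_pX_def vieta_p_in_markoff_pX)

lemma sym_markoff_p_adj: "sym (markoff_p_adj p)"
proof (rule symI)
  fix x y assume "(x, y) \<in> markoff_p_adj p"
  then obtain i where x: "x \<in> markoff_pX p" and i: "i \<in> {1,2,3}" and y: "y = vieta_p p i x"
    unfolding markoff_p_adj_def edges_pX_def by blast
  have "vieta_p p i y = x"
    using x vieta_p_involutive[of x p i] by (simp add: y markoff_pX_def)
  moreover have "y \<in> markoff_pX p" using x by (simp add: y vieta_p_in_markoff_pX)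
  ultimately show "(y, x) \<in> markoff_p_adj p"
    using i unfolding markoff_p_adj_def edges_pX_def by blast
qed

lemma red_edge_in_edges_pX:
  assumes "0 < p" "(v, i, w) \<in> edgesX" "red p v \<noteq> (0,0,0)"
  shows "(red p v, i, red p w) \<in> edges_pX p"
proof -
  from assms(2) have v: "v \<in> markoffX" and i: "i \<in> {1,2,3}" and w: "w = vieta i v"
    unfolding edgesX_def by auto
  have "red p v \<in> markoff_pX p"
    using v assms(1,3) red_in_markoff_p by (simp add: markoff_pX_def markoffX_def)
  then show ?thesis using i unfolding edges_pX_def w vieta_p_red[symmetric] by blast
qed

lemma red_rtrancl_markoff_adj:
  assumes "0 < p" "(u, w) \<in> markoff_adj\<^sup>*" "red p u \<noteq> (0,0,0)"
  shows "(red p u, red p w) \<in> (markoff_p_adj p)\<^sup>*"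
  using assms(2,3)
proof (induction rule: converse_rtrancl_induct)
  case (step u v)
  then obtain i where "(u, i, v) \<in> edgesX" unfolding markoff_adj_def by blast
  then have edge: "(red p u, i, red p v) \<in> edges_pX p"
    by (rule red_edge_in_edges_pX[OF assms(1) _ step.prems])
  then have "red p v \<noteq> (0,0,0)"
    using edges_pX_in_markoff_pX by (simp add: markoff_pX_def)
  with edge step.IH show ?case
    unfolding markoff_p_adj_def by (blast intro: converse_rtrancl_into_rtrancl)
qed simp

lemma markoff_p_connected:
  assumes "0 < p" "quot_vertices p = markoff_pX p"
  shows "connected_pX p"
proof -
  have reach: "(x, red p (3,3,3)) \<in> (markoff_p_adj p)\<^sup>*" if x: "x \<in> markoff_pX p" for x
  proof -
    from x assms(2) have "x \<in> quot_vertices p" by simp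
    then obtain u where u: "u \<in> markoffX" "red p u = x" "x \<noteq> (0,0,0)"
      unfolding quot_vertices_def by blast
    then have "(u, (3,3,3)) \<in> markoff_adj\<^sup>*" by (intro markoffX_reaches_root)
    from red_rtrancl_markoff_adj[OF assms(1) this] u(2,3) show ?thesis by simp
  qed
  have sym: "sym ((markoff_p_adj p)\<^sup>*)" by (rule sym_rtrancl[OF sym_markoff_p_adj])
  show ?thesis unfolding connected_pX_def markoff_p_adj_def[symmetric]
  proof (intro ballI)
    fix x y assume "x \<in> markoff_pX p" "y \<in> markoff_pX p"
    then have "(x, red p (3,3,3)) \<in> (markoff_p_adj p)\<^sup>*" "(red p (3,3,3), y) \<in> (markoff_p_adj p)\<^sup>*"
      using reach symD[OF sym] by blast+
    then show "(x, y) \<in> (markoff_p_adj p)\<^sup>*" by (rule rtrancl_trans)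
  qed
qed

lemma quot_edges_subset_edges_pX:
  assumes "0 < p"
  shows "quot_edges p \<subseteq> edges_pX p"
proof
  fix e assume "e \<in> quot_edges p"
  then obtain v i w where "e = (red p v, i, red p w)" "(v, i, w) \<in> edgesX" "red p v \<noteq> (0,0,0)"
    unfolding quot_edges_def by blast
  with assms show "e \<in> edges_pX p" by (simp add: red_edge_in_edges_pX)
qed

lemma edges_pX_subset_quot_edges:
  assumes "quot_vertices p = markoff_pX p"
  shows "edges_pX p \<subseteq> quot_edges p"
proof
  fix e assume "e \<in> edges_pX p"
  then obtain x i where e: "e = (x, i, vieta_p p i x)" and x: "x \<in> markoff_pX p" and i: "i \<in> {1,2,3}"
    unfolding edges_pX_def by blast
  from x assms have "x \<in> quot_vertices p" by simp
  then obtain v where v: "v \<in> markoffX" "red p v = x" "x \<noteq> (0,0,0)"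
    unfolding quot_vertices_def by blast
  have "vieta_p p i x \<in> markoff_pX p" using x by (rule vieta_p_in_markoff_pX)
  then have "red p (vieta i v) \<noteq> (0,0,0)" by (simp add: markoff_pX_def v(2)[symmetric] vieta_p_red)
  moreover have "(v, i, vieta i v) \<in> edgesX" using v(1) i unfolding edgesX_def by blast
  ultimately have "(red p v, i, red p (vieta i v)) \<in> quot_edges p"
    using v(3)[folded v(2)] unfolding quot_edges_def by blast
  then show "e \<in> quot_edges p" by (simp add: e v(2)[symmetric] vieta_p_red)
qed

lemma quot_vertices_eq_iff_red_surj:
  assumes "0 < p"
  shows "quot_vertices p = markoff_pX p \<longleftrightarrow> red p ` markoff = markoff_p p"
proof -
  have markoff: "markoff = insert (0,0,0) markoffX" by (auto simp: markoffX_def markoff_def)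
  have "red p ` markoff = insert (0,0,0) (quot_vertices p)"
    unfolding markoff quot_vertices_def by (simp add: red_zero)
  moreover have "markoff_p p = insert (0,0,0) (markoff_pX p)"
    using assms by (auto simp: markoff_pX_def markoff_p_def)
  moreover have "(0,0,0) \<notin> quot_vertices p" "(0,0,0) \<notin> markoff_pX p"
    by (simp_all add: quot_vertices_def markoff_pX_def)
  ultimately show ?thesis by (simp add: insert_ident)
qed

lemma markoff_graph_iff_red_surj:
  assumes "0 < p"
  shows "(connected_pX p \<and> quot_vertices p = markoff_pX p \<and> quot_edges p = edges_pX p)
     \<longleftrightarrow> red p ` markoff = markoff_p p"
proof
  assume "red p ` markoff = markoff_p p"
  then have vertices: "quot_vertices p = markoff_pX p" by (simp add: quot_vertices_eq_iff_red_surj[OF assms])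
  have "quot_edges p = edges_pX p"
    using quot_edges_subset_edges_pX[OF assms] edges_pX_subset_quot_edges[OF vertices] by (rule antisym)
  with vertices markoff_p_connected[OF assms vertices]
  show "connected_pX p \<and> quot_vertices p = markoff_pX p \<and> quot_edges p = edges_pX p" by blast
qed (use quot_vertices_eq_iff_red_surj[OF assms] in blast)

theorem lemma2:
  shows "(\<forall>p::int. prime p \<and> p > 2 \<longrightarrow>
            connected_pX p \<and> quot_vertices p = markoff_pX p \<and> quot_edges p = edges_pX p)
     \<longleftrightarrow> (\<forall>p::int. prime p \<and> p > 2 \<longrightarrow> red p ` markoff = markoff_p p)"
proof -
  have "(prime p \<and> p > 2 \<longrightarrow>
           connected_pX p \<and> quot_vertices p = markoff_pX p \<and> quot_edges p = edges_pX p)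
        \<longleftrightarrow> (prime p \<and> p > 2 \<longrightarrow> red p ` markoff = markoff_p p)" for p :: int
    by (cases "2 < p") (simp_all add: markoff_graph_iff_red_surj)
  then show ?thesis by (simp only:)
qed
end
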